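(* Let $a,b\ge1$ be integers with $|a-b|>4$, and let $n=a+b+2$. Then $\operatorname{diam}(\mathcal{C}_3(S(a,b)))>\lfloor 3n/2\rfloor$.
   Context: The double star $S(a,b)$ is the tree obtained by joining the centers of the stars $K_{1,a}$ and $K_{1,b}$ by an edge; it has $a+b+2$ vertices. A proper 3-coloring of a tree $T=(V,E)$ is a map $f\colon V\to\mathbb{Z}/3\mathbb{Z}$ with $f(u)\neq f(v)$ for every edge $uv\in E$. The 3-coloring graph $\mathcal{C}_3(T)$ has the proper 3-colorings as vertices, two colorings adjacent iff they differ at exactly one vertex; $\operatorname{diam}$ denotes graph diameter. *)

theory Defs
  imports Main "HOL-Library.Numeral_Type" "HOL-Library.Extended_Nat"
begin

text \<open>Vertex set {0..<a+b+2}. Vertex 0 is the centre of K_{1,a} with leaves 2..a+1,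
  vertex 1 is the centre of K_{1,b} with leaves a+2..a+b+1; the two centres are joined.\<close>

definition ds_verts :: "nat \<Rightarrow> nat \<Rightarrow> nat set" where
  "ds_verts a b = {0..<a+b+2}"

definition ds_edges :: "nat \<Rightarrow> nat \<Rightarrow> nat set set" where
  "ds_edges a b = {{0,1}} \<union> {{0,v} | v. 2 \<le> v \<and> v \<le> a+1}
                  \<union> {{1,v} | v. a+2 \<le> v \<and> v \<le> a+b+1}"

text \<open>Colours are Z/3Z, the library type 3. A colouring is a map V \<rightarrow> Z/3Z,
  represented as a total function that is 0 outside V (extensional representation).\<close>

definition proper_3col :: "'v set \<Rightarrow> 'v set set \<Rightarrow> ('v \<Rightarrow> 3) set" where
  "proper_3col V E = {f. (\<forall>v. v \<notin> V \<longrightarrow> f v = 0) \<and>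
                         (\<forall>u v. {u,v} \<in> E \<longrightarrow> u \<noteq> v \<longrightarrow> f u \<noteq> f v)}"

definition col_adj :: "'v set \<Rightarrow> ('v \<Rightarrow> 3) \<Rightarrow> ('v \<Rightarrow> 3) \<Rightarrow> bool" where
  "col_adj V f g \<longleftrightarrow> card {v \<in> V. f v \<noteq> g v} = 1"

definition is_walk :: "'a set \<Rightarrow> ('a \<Rightarrow> 'a \<Rightarrow> bool) \<Rightarrow> 'a list \<Rightarrow> bool" where
  "is_walk X R p \<longleftrightarrow> p \<noteq> [] \<and> set p \<subseteq> X \<and> (\<forall>i. Suc i < length p \<longrightarrow> R (p ! i) (p ! Suc i))"

definition graph_dist :: "'a set \<Rightarrow> ('a \<Rightarrow> 'a \<Rightarrow> bool) \<Rightarrow> 'a \<Rightarrow> 'a \<Rightarrow> enat" where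
  "graph_dist X R x y =
     (INF p \<in> {p. is_walk X R p \<and> hd p = x \<and> last p = y}. enat (length p - 1))"

text \<open>Diameter: supremum of distances (infinite if the graph is disconnected).\<close>

definition graph_diam :: "'a set \<Rightarrow> ('a \<Rightarrow> 'a \<Rightarrow> bool) \<Rightarrow> enat" where
  "graph_diam X R = (SUP x \<in> X. SUP y \<in> X. graph_dist X R x y)"

definition col_graph_diam :: "'v set \<Rightarrow> 'v set set \<Rightarrow> enat" where
  "col_graph_diam V E = graph_diam (proper_3col V E) (col_adj V)"

end

theory Submission
  imports Defs
begin

text \<open>
  Let g colour the centres c, d with 2, 1 and every leaf with 0. The distance from a colouring h
  to g is bounded below by a potential: the least of a few affine estimates, each costing a
  constant plus, per leaf, an amount depending only on whether the leaf already has a prescribed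
  colour, where the estimates available depend only on the colours of the two centres.
  Recolouring a leaf changes each estimate by at most one. A centre can only be recoloured while
  all of its leaves carry the colour of the other centre, and the family of estimates is closed
  under prefixing such a move. Hence the potential drops by at most one per step and vanishes
  at g. If the star at c has at least five more leaves than the star at d, colouring c with 0,
  d with 1, the leaves of d with 2, and a suitable number of the leaves of c with 1 (the others
  with 2) gives a colouring of potential \<lfloor>3n/2\<rfloor> + 1.
\<close>

lemma UNIV_3: "(UNIV :: 3 set) = {0, 1, 2}"
proof -
  have "{0, 1, 2 :: 3} = UNIV" by (rule card_subset_eq) simp_all
  then show ?thesis ..
qed

lemma forall_3: "(\<forall>i::3. P i) \<longleftrightarrow> P 0 \<and> P 1 \<and> P 2"
  using UNIV_3 by (metis UNIV_I insertE singletonD)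

lemma exhaust_3:
  fixes x :: 3
  obtains "x = 0" | "x = 1" | "x = 2"
  using UNIV_3 by blast

lemma third_colour:
  fixes x y p q :: 3
  shows "x \<noteq> y \<Longrightarrow> p \<notin> {x, y} \<Longrightarrow> q \<notin> {x, y} \<Longrightarrow> p = q"
  by (cases x rule: exhaust_3; cases y rule: exhaust_3; cases p rule: exhaust_3;
      cases q rule: exhaust_3) auto

lemma is_walk_Cons_Cons:
  "is_walk X R (x # y # zs) \<longleftrightarrow> x \<in> X \<and> R x y \<and> is_walk X R (y # zs)"
  by (auto simp: is_walk_def nth_Cons split: nat.splits)

lemma is_walk_potential_bound:
  fixes \<phi> :: "'a \<Rightarrow> nat"
  assumes step: "\<And>x y. x \<in> X \<Longrightarrow> y \<in> X \<Longrightarrow> R x y \<Longrightarrow> \<phi> x \<le> \<phi> y + 1"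
  shows "is_walk X R p \<Longrightarrow> \<phi> (hd p) \<le> \<phi> (last p) + (length p - 1)"
proof (induction p rule: induct_list012)
  case (3 x y zs)
  then have "x \<in> X" "R x y" "is_walk X R (y # zs)"
    by (simp_all add: is_walk_Cons_Cons)
  moreover from this(3) have "y \<in> X"
    by (simp add: is_walk_def)
  moreover have "\<phi> y \<le> \<phi> (last (y # zs)) + length zs"
    using "3.IH"(2) \<open>is_walk X R (y # zs)\<close> by simp
  ultimately show ?case
    using step[of x y] by simp
qed (simp_all add: is_walk_def)

lemma graph_dist_ge_potential_diff:
  fixes \<phi> :: "'a \<Rightarrow> nat"
  assumes "\<And>x y. x \<in> X \<Longrightarrow> y \<in> X \<Longrightarrow> R x y \<Longrightarrow> \<phi> x \<le> \<phi> y + 1"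
  shows "enat (\<phi> x - \<phi> y) \<le> graph_dist X R x y"
  unfolding graph_dist_def
proof (rule INF_greatest)
  fix p assume "p \<in> {p. is_walk X R p \<and> hd p = x \<and> last p = y}"
  then have walk: "is_walk X R p" and "hd p = x" "last p = y"
    by simp_all
  then have "\<phi> x \<le> \<phi> y + (length p - 1)"
    using is_walk_potential_bound[OF assms walk] by simp
  then show "enat (\<phi> x - \<phi> y) \<le> enat (length p - 1)"
    by simp
qed

lemma graph_dist_le_graph_diam:
  "x \<in> X \<Longrightarrow> y \<in> X \<Longrightarrow> graph_dist X R x y \<le> graph_diam X R"
  unfolding graph_diam_def by (meson SUP_upper2 order_refl)

lemma col_adjE:
  assumes "col_adj V h h'"
  obtains u where "u \<in> V" "h u \<noteq> h' u" "\<And>v. v \<in> V \<Longrightarrow> v \<noteq> u \<Longrightarrow> h v = h' v"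
proof -
  obtain u where "{v \<in> V. h v \<noteq> h' v} = {u}"
    using assms by (auto simp: col_adj_def card_1_singleton_iff)
  then show thesis using that by blast
qed

text \<open>An estimate (k, wL, tL, wM, tM) charges k, plus tL for each leaf of L and tM for each
  leaf of M, plus one more for each leaf not coloured wL resp. wM.\<close>

type_synonym estimate = "nat \<times> 3 \<times> nat \<times> 3 \<times> nat"

definition cost_L :: "estimate \<Rightarrow> 3 \<Rightarrow> nat" where
  "cost_L s i = (case s of (k, wL, tL, wM, tM) \<Rightarrow> tL + (if i = wL then 0 else 1))"

definition cost_M :: "estimate \<Rightarrow> 3 \<Rightarrow> nat" where
  "cost_M s i = (case s of (k, wL, tL, wM, tM) \<Rightarrow> tM + (if i = wM then 0 else 1))"

definition estimate_val :: "'v set \<Rightarrow> 'v set \<Rightarrow> estimate \<Rightarrow> ('v \<Rightarrow> 3) \<Rightarrow> nat" where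
  "estimate_val L M s h = fst s + (\<Sum>v\<in>L. cost_L s (h v)) + (\<Sum>v\<in>M. cost_M s (h v))"

definition estimate_le :: "estimate \<Rightarrow> estimate \<Rightarrow> bool" where
  "estimate_le s t \<longleftrightarrow>
    fst s \<le> fst t \<and> (\<forall>i. cost_L s i \<le> cost_L t i) \<and> (\<forall>i. cost_M s i \<le> cost_M t i)"

text \<open>The estimate for first recolouring the centre c, which requires every leaf of L to have
  the colour y of d, and then following s.\<close>

definition recolour_c :: "3 \<Rightarrow> estimate \<Rightarrow> estimate" where
  "recolour_c y s = (case s of (k, wL, tL, wM, tM) \<Rightarrow> (k + 1, y, cost_L s y, wM, tM))"

definition recolour_d :: "3 \<Rightarrow> estimate \<Rightarrow> estimate" where
  "recolour_d x s = (case s of (k, wL, tL, wM, tM) \<Rightarrow> (k + 1, wL, tL, x, cost_M s x))"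

definition estimates :: "3 \<Rightarrow> 3 \<Rightarrow> estimate list" where
  "estimates x y =
    (if x = 0 \<and> y = 1 then [(1, 1, 1, 0, 0), (5, 2, 1, 0, 3)]
     else if x = 0 \<and> y = 2 then [(2, 1, 1, 0, 0), (4, 2, 1, 1, 2)]
     else if x = 1 \<and> y = 0 then [(2, 0, 0, 2, 1), (4, 2, 2, 1, 1)]
     else if x = 1 \<and> y = 2 then [(3, 0, 0, 1, 2), (3, 2, 2, 0, 0)]
     else if x = 2 \<and> y = 0 then [(1, 0, 0, 2, 1), (5, 0, 3, 1, 1)]
     else if x = 2 \<and> y = 1 then [(0, 0, 0, 0, 0)]
     else [])"

lemma estimates_nonempty: "x \<noteq> y \<Longrightarrow> estimates x y \<noteq> []"
  by (cases x rule: exhaust_3; cases y rule: exhaust_3) (simp_all add: estimates_def)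

lemma estimates_closed_recolour_c:
  "x \<noteq> x' \<Longrightarrow> y \<noteq> x \<Longrightarrow> y \<noteq> x' \<Longrightarrow> s \<in> set (estimates x' y) \<Longrightarrow>
    \<exists>t\<in>set (estimates x y). estimate_le t (recolour_c y s)"
  by (cases x rule: exhaust_3; cases x' rule: exhaust_3; cases y rule: exhaust_3)
    (auto simp: estimates_def estimate_le_def cost_L_def cost_M_def recolour_c_def forall_3)

lemma estimates_closed_recolour_d:
  "y \<noteq> y' \<Longrightarrow> x \<noteq> y \<Longrightarrow> x \<noteq> y' \<Longrightarrow> s \<in> set (estimates x y') \<Longrightarrow>
    \<exists>t\<in>set (estimates x y). estimate_le t (recolour_d x s)"
  by (cases y rule: exhaust_3; cases y' rule: exhaust_3; cases x rule: exhaust_3)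
    (auto simp: estimates_def estimate_le_def cost_L_def cost_M_def recolour_d_def forall_3)

lemma estimate_val_mono: "estimate_le s t \<Longrightarrow> estimate_val L M s h \<le> estimate_val L M t h"
  unfolding estimate_le_def estimate_val_def by (intro add_mono sum_mono) auto

lemma sum_le_sum_plus_card_differ:
  fixes \<phi> :: "'c \<Rightarrow> nat"
  assumes "finite A" "\<And>i j. \<phi> i \<le> \<phi> j + 1"
  shows "(\<Sum>v\<in>A. \<phi> (h v)) \<le> (\<Sum>v\<in>A. \<phi> (h' v)) + card {v \<in> A. h v \<noteq> h' v}"
proof -
  have "(\<Sum>v\<in>A. \<phi> (h v)) \<le> (\<Sum>v\<in>A. \<phi> (h' v) + of_bool (h v \<noteq> h' v))"
    using assms(2) by (intro sum_mono) auto
  also have "\<dots> = (\<Sum>v\<in>A. \<phi> (h' v)) + card {v \<in> A. h v \<noteq> h' v}"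
    using assms(1) by (simp add: sum.distrib Collect_conj_eq)
  finally show ?thesis .
qed

lemma estimate_val_le_differ:
  assumes "finite L" "finite M" "L \<inter> M = {}"
  shows "estimate_val L M s h \<le> estimate_val L M s h' + card {v \<in> L \<union> M. h v \<noteq> h' v}"
proof -
  have "\<And>i j. cost_L s i \<le> cost_L s j + 1" "\<And>i j. cost_M s i \<le> cost_M s j + 1"
    by (auto simp: cost_L_def cost_M_def split: prod.splits)
  moreover have "{v \<in> L \<union> M. h v \<noteq> h' v} = {v \<in> L. h v \<noteq> h' v} \<union> {v \<in> M. h v \<noteq> h' v}"
    by blast
  then have "card {v \<in> L \<union> M. h v \<noteq> h' v} = card {v \<in> L. h v \<noteq> h' v} + card {v \<in> M. h v \<noteq> h' v}"
    using assms by (simp add: card_Un_disjoint disjoint_iff)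
  ultimately show ?thesis
    using sum_le_sum_plus_card_differ[OF assms(1), of "cost_L s" h h']
      sum_le_sum_plus_card_differ[OF assms(2), of "cost_M s" h h']
    by (simp add: estimate_val_def)
qed

lemma estimate_val_recolour_c:
  assumes "\<forall>v\<in>L. h v = y \<and> h' v = y" "\<forall>v\<in>M. h v = h' v"
  shows "estimate_val L M (recolour_c y s) h = estimate_val L M s h' + 1"
  using assms by (cases s) (simp add: estimate_val_def recolour_c_def cost_L_def cost_M_def)

lemma estimate_val_recolour_d:
  assumes "\<forall>v\<in>M. h v = x \<and> h' v = x" "\<forall>v\<in>L. h v = h' v"
  shows "estimate_val L M (recolour_d x s) h = estimate_val L M s h' + 1"
  using assms by (cases s) (simp add: estimate_val_def recolour_d_def cost_L_def cost_M_def)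

lemma estimate_val_piecewise_constant:
  assumes "finite L" "K \<subseteq> L" "\<forall>v\<in>K. h v = p" "\<forall>v\<in>L - K. h v = q" "\<forall>v\<in>M. h v = r"
  shows "estimate_val L M s h =
    fst s + card K * cost_L s p + (card L - card K) * cost_L s q + card M * cost_M s r"
proof -
  have "(\<Sum>v\<in>L. cost_L s (h v)) = (\<Sum>v\<in>K. cost_L s (h v)) + (\<Sum>v\<in>L - K. cost_L s (h v))"
    using assms(1,2) by (metis add.commute sum.subset_diff)
  also have "\<dots> = card K * cost_L s p + (card L - card K) * cost_L s q"
    using assms by (simp add: card_Diff_subset finite_subset)
  finally show ?thesis
    using assms(5) by (simp add: estimate_val_def)
qed

locale double_star =
  fixes V :: "'v set" and E :: "'v set set" and c d :: 'v and L M :: "'v set"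
  assumes finite_leaves: "finite L" "finite M"
    and centres_distinct: "c \<noteq> d"
    and centres_not_leaves: "c \<notin> L \<union> M" "d \<notin> L \<union> M"
    and leaves_disjoint: "L \<inter> M = {}"
    and verts: "V = {c, d} \<union> L \<union> M"
    and edges: "E = insert {c, d} ((\<lambda>l. {c, l}) ` L \<union> (\<lambda>l. {d, l}) ` M)"
begin

lemma swap: "double_star V E d c M L"
  by unfold_locales
    (use finite_leaves centres_distinct centres_not_leaves leaves_disjoint in
      \<open>auto simp: verts edges insert_commute\<close>)

lemma proper_edges_iff:
  "(\<forall>u v. {u, v} \<in> E \<longrightarrow> u \<noteq> v \<longrightarrow> h u \<noteq> h v) \<longleftrightarrow>
    h c \<noteq> h d \<and> (\<forall>l\<in>L. h l \<noteq> h c) \<and> (\<forall>l\<in>M. h l \<noteq> h d)"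
proof
  assume proper: "\<forall>u v. {u, v} \<in> E \<longrightarrow> u \<noteq> v \<longrightarrow> h u \<noteq> h v"
  have "h c \<noteq> h d"
    using proper[rule_format, of c d] centres_distinct by (simp add: edges)
  moreover have "h l \<noteq> h c" if "l \<in> L" for l
  proof -
    have "{c, l} \<in> E" "c \<noteq> l" using that centres_not_leaves by (auto simp: edges)
    with proper show ?thesis by metis
  qed
  moreover have "h l \<noteq> h d" if "l \<in> M" for l
  proof -
    have "{d, l} \<in> E" "d \<noteq> l" using that centres_not_leaves by (auto simp: edges)
    with proper show ?thesis by metis
  qed
  ultimately show "h c \<noteq> h d \<and> (\<forall>l\<in>L. h l \<noteq> h c) \<and> (\<forall>l\<in>M. h l \<noteq> h d)"
    by blast
next
  assume "h c \<noteq> h d \<and> (\<forall>l\<in>L. h l \<noteq> h c) \<and> (\<forall>l\<in>M. h l \<noteq> h d)"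
  then show "\<forall>u v. {u, v} \<in> E \<longrightarrow> u \<noteq> v \<longrightarrow> h u \<noteq> h v"
    unfolding edges by (force simp: doubleton_eq_iff)
qed

lemma proper_3col_iff:
  "h \<in> proper_3col V E \<longleftrightarrow>
    (\<forall>v. v \<notin> V \<longrightarrow> h v = 0) \<and> h c \<noteq> h d \<and> (\<forall>l\<in>L. h l \<noteq> h c) \<and> (\<forall>l\<in>M. h l \<noteq> h d)"
  unfolding proper_3col_def proper_edges_iff by simp

definition potential :: "('v \<Rightarrow> 3) \<Rightarrow> nat" where
  "potential h = Min ((\<lambda>s. estimate_val L M s h) ` set (estimates (h c) (h d)))"

lemma potential_le: "s \<in> set (estimates (h c) (h d)) \<Longrightarrow> potential h \<le> estimate_val L M s h"
  unfolding potential_def by simp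

lemma potential_attained:
  assumes "h c \<noteq> h d"
  obtains s where "s \<in> set (estimates (h c) (h d))" "potential h = estimate_val L M s h"
proof -
  have "potential h \<in> (\<lambda>s. estimate_val L M s h) ` set (estimates (h c) (h d))"
    unfolding potential_def using estimates_nonempty[OF assms] by (intro Min_in) simp_all
  then show thesis using that by blast
qed

lemma estimate_step_recolour_c:
  assumes h: "h \<in> proper_3col V E" and h': "h' \<in> proper_3col V E" and moved: "h c \<noteq> h' c"
    and agree: "\<And>v. v \<in> V \<Longrightarrow> v \<noteq> c \<Longrightarrow> h v = h' v"
    and s: "s \<in> set (estimates (h' c) (h' d))"
  shows "\<exists>t\<in>set (estimates (h c) (h d)). estimate_val L M t h \<le> estimate_val L M s h' + 1"
proof -
  note P = h[unfolded proper_3col_iff] and P' = h'[unfolded proper_3col_iff]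
  have "h d = h' d" and "\<forall>v\<in>M. h v = h' v"
    using agree centres_distinct centres_not_leaves by (auto simp: verts)
  \<comment> \<open>a leaf of c avoids both the old and the new colour of c, and so does d\<close>
  moreover have "\<forall>v\<in>L. h v = h d \<and> h' v = h d"
  proof
    fix v assume "v \<in> L"
    moreover have "h v = h' v" using agree \<open>v \<in> L\<close> centres_not_leaves by (auto simp: verts)
    ultimately show "h v = h d \<and> h' v = h d"
      using third_colour[of "h c" "h' c" "h v" "h d"] P P' moved \<open>h d = h' d\<close> by auto
  qed
  moreover obtain t where "t \<in> set (estimates (h c) (h d))" "estimate_le t (recolour_c (h d) s)"
    using estimates_closed_recolour_c[of "h c" "h' c" "h d" s] P P' moved s \<open>h d = h' d\<close> by auto
  ultimately show ?thesis
    using estimate_val_mono[of t "recolour_c (h d) s" L M h]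
      estimate_val_recolour_c[of L h "h d" h' M s] by auto
qed

lemma estimate_step_recolour_d:
  assumes h: "h \<in> proper_3col V E" and h': "h' \<in> proper_3col V E" and moved: "h d \<noteq> h' d"
    and agree: "\<And>v. v \<in> V \<Longrightarrow> v \<noteq> d \<Longrightarrow> h v = h' v"
    and s: "s \<in> set (estimates (h' c) (h' d))"
  shows "\<exists>t\<in>set (estimates (h c) (h d)). estimate_val L M t h \<le> estimate_val L M s h' + 1"
proof -
  note P = h[unfolded proper_3col_iff] and P' = h'[unfolded proper_3col_iff]
  have "h c = h' c" and "\<forall>v\<in>L. h v = h' v"
    using agree centres_distinct centres_not_leaves by (auto simp: verts)
  moreover have "\<forall>v\<in>M. h v = h c \<and> h' v = h c"
  proof
    fix v assume "v \<in> M"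
    moreover have "h v = h' v" using agree \<open>v \<in> M\<close> centres_not_leaves by (auto simp: verts)
    ultimately show "h v = h c \<and> h' v = h c"
      using third_colour[of "h d" "h' d" "h v" "h c"] P P' moved \<open>h c = h' c\<close> by auto
  qed
  moreover obtain t where "t \<in> set (estimates (h c) (h d))" "estimate_le t (recolour_d (h c) s)"
    using estimates_closed_recolour_d[of "h d" "h' d" "h c" s] P P' moved s \<open>h c = h' c\<close> by auto
  ultimately show ?thesis
    using estimate_val_mono[of t "recolour_d (h c) s" L M h]
      estimate_val_recolour_d[of M h "h c" h' L s] by auto
qed

lemma estimate_val_le_if_col_adj:
  assumes "col_adj V h h'"
  shows "estimate_val L M s h \<le> estimate_val L M s h' + 1"
proof -
  have "card {v \<in> L \<union> M. h v \<noteq> h' v} \<le> card {v \<in> V. h v \<noteq> h' v}"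
    using finite_leaves by (intro card_mono) (auto simp: verts)
  then show ?thesis
    using assms estimate_val_le_differ[OF finite_leaves leaves_disjoint, of s h h']
    by (simp add: col_adj_def)
qed

lemma estimate_step:
  assumes h: "h \<in> proper_3col V E" and h': "h' \<in> proper_3col V E" and adj: "col_adj V h h'"
    and s: "s \<in> set (estimates (h' c) (h' d))"
  shows "\<exists>t\<in>set (estimates (h c) (h d)). estimate_val L M t h \<le> estimate_val L M s h' + 1"
proof -
  obtain u where "u \<in> V" and hu: "h u \<noteq> h' u"
    and agree: "\<And>v. v \<in> V \<Longrightarrow> v \<noteq> u \<Longrightarrow> h v = h' v"
    using col_adjE[OF adj] by metis
  consider "u = c" | "u = d" | "u \<in> L \<union> M"
    using \<open>u \<in> V\<close> verts by auto
  then show ?thesis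
  proof cases
    case 1
    with hu agree show ?thesis
      by (intro estimate_step_recolour_c[OF h h' _ _ s]) auto
  next
    case 2
    with hu agree show ?thesis
      by (intro estimate_step_recolour_d[OF h h' _ _ s]) auto
  next
    case 3
    then have "h c = h' c" "h d = h' d"
      using agree centres_not_leaves by (auto simp: verts)
    with s show ?thesis
      using estimate_val_le_if_col_adj[OF adj, of s] by auto
  qed
qed

lemma potential_step:
  assumes "h \<in> proper_3col V E" "h' \<in> proper_3col V E" "col_adj V h h'"
  shows "potential h \<le> potential h' + 1"
proof -
  obtain s where "s \<in> set (estimates (h' c) (h' d))" "potential h' = estimate_val L M s h'"
    using assms(2) by (auto simp: proper_3col_iff elim: potential_attained)
  then show ?thesis
    using estimate_step[OF assms] potential_le by fastforce
qed

lemma potential_le_graph_dist: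
  "enat (potential h - potential h') \<le> graph_dist (proper_3col V E) (col_adj V) h h'"
  using potential_step by (rule graph_dist_ge_potential_diff)

definition target :: "'v \<Rightarrow> 3" where
  "target v = (if v = c then 2 else if v = d then 1 else 0)"

lemma target_proper: "target \<in> proper_3col V E"
  unfolding proper_3col_iff target_def using centres_distinct centres_not_leaves by (auto simp: verts)

lemma potential_target: "potential target = 0"
proof -
  have "estimate_val L M (0, 0, 0, 0, 0) target = 0"
    using centres_not_leaves
    by (auto simp: estimate_val_def cost_L_def cost_M_def target_def intro!: sum.neutral)
  then show ?thesis
    using centres_distinct potential_le[of "(0, 0, 0, 0, 0)" target]
    by (simp add: target_def estimates_def)
qed

definition start :: "'v set \<Rightarrow> 'v \<Rightarrow> 3" where
  "start K v = (if v = c then 0 else if v = d \<or> v \<in> K then 1 else if v \<in> V then 2 else 0)"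

lemma start_proper: "K \<subseteq> L \<Longrightarrow> start K \<in> proper_3col V E"
  unfolding proper_3col_iff start_def
  using centres_distinct centres_not_leaves leaves_disjoint by (auto simp: verts)

lemma potential_start:
  assumes "K \<subseteq> L"
  shows "potential (start K) =
    min (2 * card L + card M + 1 - card K) (card L + card K + 4 * card M + 5)"
proof -
  have "card K \<le> card L" using assms finite_leaves by (simp add: card_mono)
  have "estimate_val L M s (start K) =
      fst s + card K * cost_L s 1 + (card L - card K) * cost_L s 2 + card M * cost_M s 2" for s
    using assms centres_distinct centres_not_leaves leaves_disjoint finite_leaves
    unfolding start_def by (intro estimate_val_piecewise_constant) (auto simp: verts)
  then show ?thesis
    using \<open>card K \<le> card L\<close> centres_distinct
    by (simp add: potential_def start_def estimates_def cost_L_def cost_M_def)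
qed

lemma col_graph_diam_ge:
  assumes "k \<le> card L"
  shows "enat (min (2 * card L + card M + 1 - k) (card L + k + 4 * card M + 5)) \<le> col_graph_diam V E"
proof -
  obtain K where "K \<subseteq> L" "card K = k"
    using obtain_subset_with_card_n[OF assms] by blast
  have "enat (potential (start K)) \<le> graph_dist (proper_3col V E) (col_adj V) (start K) target"
    using potential_le_graph_dist[of "start K" target] by (simp add: potential_target)
  also have "\<dots> \<le> col_graph_diam V E"
    unfolding col_graph_diam_def
    using start_proper[OF \<open>K \<subseteq> L\<close>] target_proper by (rule graph_dist_le_graph_diam)
  finally show ?thesis
    using potential_start[OF \<open>K \<subseteq> L\<close>] \<open>card K = k\<close> by simp
qed

lemma col_graph_diam_gt_if_unbalanced:
  assumes "card M \<ge> 1" "card L \<ge> card M + 5"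
  shows "enat (3 * (card L + card M + 2) div 2) < col_graph_diam V E"
proof -
  define N where "N = 3 * (card L + card M + 2) div 2"
  define k where "k = 2 * card L + card M - N"
  have N: "2 * N \<le> 3 * card L + 3 * card M + 6" "3 * card L + 3 * card M + 6 \<le> 2 * N + 1"
    unfolding N_def by presburger+
  with assms have "N \<le> 2 * card L + card M"
    by presburger
  then have "k + N = 2 * card L + card M"
    unfolding k_def by simp
  then have "2 * card L + card M + 1 - k = N + 1"
    by simp
  moreover have "k \<le> card L"
    using \<open>k + N = 2 * card L + card M\<close> N by linarith
  moreover have "N + 1 \<le> card L + k + 4 * card M + 5"
    using \<open>k + N = 2 * card L + card M\<close> N assms by linarith
  ultimately have "enat (N + 1) \<le> col_graph_diam V E"
    using col_graph_diam_ge[of k] by simp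
  then show ?thesis
    unfolding N_def by (simp add: Suc_ile_eq)
qed

end

lemma double_star_ds: "double_star (ds_verts a b) (ds_edges a b) 0 1 {2..a+1} {a+2..a+b+1}"
proof unfold_locales
  show "ds_edges a b = insert {0, 1} ((\<lambda>l. {0, l}) ` {2..a+1} \<union> (\<lambda>l. {1, l}) ` {a+2..a+b+1})"
    unfolding ds_edges_def by (auto simp: setcompr_eq_image atLeastAtMost_def atLeast_def atMost_def)
qed (auto simp: ds_verts_def)

theorem mainTheorem14:
  fixes a b :: nat
  assumes "a \<ge> 1" and "b \<ge> 1" and "\<bar>int a - int b\<bar> > 4"
  shows "col_graph_diam (ds_verts a b) (ds_edges a b) > enat ((3 * (a + b + 2)) div 2)"
proof -
  interpret double_star "ds_verts a b" "ds_edges a b" 0 1 "{2..a+1}" "{a+2..a+b+1}"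
    by (rule double_star_ds)
  interpret swapped: double_star "ds_verts a b" "ds_edges a b" 1 0 "{a+2..a+b+1}" "{2..a+1}"
    by (rule swap)
  consider "a \<ge> b + 5" | "b \<ge> a + 5" using assms(3) by linarith
  then show ?thesis
  proof cases
    case 1
    then show ?thesis using col_graph_diam_gt_if_unbalanced assms(2) by simp
  next
    case 2
    then show ?thesis using swapped.col_graph_diam_gt_if_unbalanced assms(1) by (simp add: add.commute)
  qed
qed

end
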